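(* Let $v_1,\dots,v_n\in\mathbb{R}^d$ and let $b\ge d+1$ be an integer. Let $x\in[0,1]^n$ with $\sum_{i=1}^n x(i)=b$ and $X=\sum_{i=1}^n x(i)v_iv_i^\top$. Let $S\subseteq[n]$ with $|S|=b$ be such that $Z=\sum_{i\in S}v_iv_i^\top$ is nonsingular, and let \[ Z'=Z-v_{i^*}v_{i^*}^\top+v_{j^*}v_{j^*}^\top,\quad (i^*,j^* )\in\arg\max_{i\in S,\,j\in[n]\setminus S}\det(Z-v_iv_i^\top+v_jv_j^\top). \] If $\det(Z)^{1/d}\le\frac{b-d-1}{b}\det(X)^{1/d}$, then $\det(Z')\ge\big(1+\frac{d}{4b^3}\big)\det(Z)$. *)

theory Defs
  imports "HOL-Analysis.Analysis"
begin

definition outer :: "real^'d \<Rightarrow> real^'d \<Rightarrow> real^'d^'d" where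
  "outer u w = (\<chi> i j. u $ i * w $ j)"

end

theory Submission
  imports Defs
begin

text \<open>Let \<open>G = Z\<inverse>\<close> and let \<open>\<tau> j = v j \<bullet> G v j\<close> be the leverage scores. The leverages over \<open>S\<close>
sum to \<open>tr (G Z) = d\<close>, whereas \<open>\<Sum>j x j \<tau> j = tr (G X)\<close> is the sum of the generalized eigenvalues
of \<open>(X, Z)\<close>; by AM-GM and the hypothesis it is at least \<open>d (det X / det Z)\<^bsup>1/d\<^esup> \<ge> d b / (b - d - 1)\<close>.
Comparing the two sums, the smallest leverage \<open>\<tau> i\<close> in \<open>S\<close> and the largest leverage \<open>\<tau> j\<close> outside
\<open>S\<close> satisfy \<open>(1 - \<tau> i) (1 + \<tau> j) \<ge> 1 + d / b\<^sup>2\<close>. By the matrix determinant lemma this product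
bounds \<open>det (Z - v\<^sub>i v\<^sub>i\<^sup>T + v\<^sub>j v\<^sub>j\<^sup>T) / det Z\<close> from below, and the best swap does at least as well.\<close>

definition pos_semidef :: "real^'n^'n \<Rightarrow> bool" where
  "pos_semidef A \<longleftrightarrow> (\<forall>y. 0 \<le> y \<bullet> (A *v y))"

definition pos_def :: "real^'n^'n \<Rightarrow> bool" where
  "pos_def A \<longleftrightarrow> (\<forall>y. y \<noteq> 0 \<longrightarrow> 0 < y \<bullet> (A *v y))"

definition orthonormal_wrt :: "real^'n^'n \<Rightarrow> (real^'n) set \<Rightarrow> bool" where
  "orthonormal_wrt A F \<longleftrightarrow> (\<forall>f\<in>F. \<forall>g\<in>F. f \<bullet> (A *v g) = (if f = g then 1 else 0))"

lemma outer_mult_vec: "outer u w *v y = (w \<bullet> y) *\<^sub>R u"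
  by (simp add: outer_def matrix_vector_mult_def vec_eq_iff inner_vec_def sum_distrib_left
      mult.commute mult.left_commute)

lemma matrix_mult_outer: "A ** outer u w = outer (A *v u) w"
  by (simp add: outer_def matrix_matrix_mult_def matrix_vector_mult_def vec_eq_iff
      sum_distrib_right mult.assoc)

lemma outer_mult_matrix: "outer u w ** (A :: real^'n^'n) = outer u (transpose A *v w)"
  by (simp add: outer_def matrix_matrix_mult_def matrix_vector_mult_def vec_eq_iff
      sum_distrib_left transpose_def mult.commute mult.left_commute)

lemma scaleR_outer: "c *\<^sub>R outer u w = outer (c *\<^sub>R u) w"
  by (simp add: outer_def vec_eq_iff)

lemma outer_uminus_left: "outer (- u) w = - outer u w"
  by (simp add: outer_def vec_eq_iff)

lemma outer_zero_right: "outer u 0 = 0"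
  by (simp add: outer_def vec_eq_iff)

lemma transpose_outer: "transpose (outer u w) = outer w u"
  by (simp add: outer_def transpose_def vec_eq_iff mult.commute)

lemma trace_outer: "trace (outer u w) = u \<bullet> w"
  by (simp add: trace_def outer_def inner_vec_def)

lemma matrix_add_rdistrib: "(A + B) ** C = A ** C + B ** C"
  by (vector matrix_matrix_mult_def sum.distrib[symmetric] field_simps)

lemma inner_matrix_vector_transpose: "x \<bullet> ((A :: real^'n^'n) *v y) = (transpose A *v x) \<bullet> y"
  by (metis dot_lmul_matrix transpose_matrix_vector transpose_transpose)

lemma inner_symmetric_matrix:
  "transpose A = A \<Longrightarrow> x \<bullet> ((A :: real^'n^'n) *v y) = y \<bullet> (A *v x)"
  by (metis inner_matrix_vector_transpose inner_commute)

lemma sum_matrix_vector_mult: "(\<Sum>i\<in>S. A i) *v y = (\<Sum>i\<in>S. A i *v y)"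
  by (induction S rule: infinite_finite_induct) (auto simp: algebra_simps)

lemma transpose_sum: "transpose (\<Sum>i\<in>S. A i) = (\<Sum>i\<in>S. transpose (A i))"
  by (induction S rule: infinite_finite_induct) (auto simp: transpose_def vec_eq_iff)

lemma trace_mult_sum:
  fixes B :: "real^'n^'n"
  shows "trace (B ** (\<Sum>i\<in>S. A i)) = (\<Sum>i\<in>S. trace (B ** A i))"
  by (induction S rule: infinite_finite_induct)
    (simp_all add: matrix_add_ldistrib trace_add, simp_all add: trace_def)

lemma transpose_mult_mult_nth:
  "(transpose U ** A ** U) $ k $ l = column k U \<bullet> (A *v column l U)"
proof -
  have "(transpose U ** A ** U) $ k $ l = (\<Sum>j\<in>UNIV. (\<Sum>i\<in>UNIV. U $ i $ k * A $ i $ j) * U $ j $ l)"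
    by (simp add: matrix_matrix_mult_def transpose_def)
  also have "\<dots> = (\<Sum>i\<in>UNIV. U $ i $ k * (\<Sum>j\<in>UNIV. A $ i $ j * U $ j $ l))"
    by (simp add: sum_distrib_left sum_distrib_right mult.assoc) (rule sum.swap)
  finally show ?thesis
    by (simp add: inner_vec_def matrix_vector_mult_def column_def)
qed

lemma inner_sum_outer:
  "y \<bullet> ((\<Sum>i\<in>S. c i *\<^sub>R outer (v i) (v i)) *v y) = (\<Sum>i\<in>S. c i * (v i \<bullet> y)\<^sup>2)"
  by (simp add: sum_matrix_vector_mult scaleR_matrix_vector_assoc[symmetric] outer_mult_vec
      inner_sum_right power2_eq_square inner_commute mult.assoc)

lemma transpose_sum_outer:
  "transpose (\<Sum>i\<in>S. c i *\<^sub>R outer (v i) (v i)) = (\<Sum>i\<in>S. c i *\<^sub>R outer (v i) (v i))"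
  by (simp add: transpose_sum transpose_scalar transpose_outer)

lemma trace_mult_sum_outer:
  "trace (A ** (\<Sum>i\<in>S. c i *\<^sub>R outer (v i) (v i))) = (\<Sum>i\<in>S. c i * (v i \<bullet> (A *v v i)))"
proof -
  have "trace (A ** (c i *\<^sub>R outer (v i) (v i))) = c i * (v i \<bullet> (A *v v i))" for i
    by (simp add: scaleR_outer matrix_mult_outer trace_outer inner_commute
        matrix_vector_mult_scaleR)
  then show ?thesis by (simp add: trace_mult_sum)
qed

lemma pos_semidef_sum_outer:
  "(\<And>i. i \<in> S \<Longrightarrow> 0 \<le> c i) \<Longrightarrow> pos_semidef (\<Sum>i\<in>S. c i *\<^sub>R outer (v i) (v i))"
  by (auto simp: pos_semidef_def inner_sum_outer intro!: sum_nonneg)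

lemma det_mat1_add_outer: "det (mat 1 + outer y c) = 1 + c \<bullet> (y :: real^'n)"
proof (cases "c = 0")
  case True
  then show ?thesis by (simp add: outer_zero_right)
next
  case False
  fix k :: 'n
  \<comment> \<open>Rotate c onto a coordinate axis; then only column k differs from the identity.\<close>
  obtain Q where Q: "orthogonal_matrix Q" and Qk: "Q *v axis k 1 = (1 / norm c) *\<^sub>R c"
    using orthogonal_matrix_exists_basis[of "(1 / norm c) *\<^sub>R c"] False by auto
  have QTQ: "transpose Q ** Q = mat 1" and QQT: "Q ** transpose Q = mat 1"
    using Q unfolding orthogonal_matrix_def by auto
  define y' where "y' = transpose Q *v y"
  have Qc: "c v* Q = norm c *\<^sub>R axis k 1"
  proof -
    have "transpose Q *v c = norm c *\<^sub>R (transpose Q *v (Q *v axis k 1))"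
      using False by (simp add: Qk matrix_vector_mult_scaleR)
    then show ?thesis by (simp add: matrix_vector_mul_assoc QTQ)
  qed
  define x where "x = axis k 1 + norm c *\<^sub>R y'"
  have "transpose Q ** (mat 1 + outer y c) ** Q = mat 1 + outer y' (norm c *\<^sub>R axis k 1)"
    by (simp add: matrix_add_ldistrib matrix_add_rdistrib QTQ matrix_mult_outer outer_mult_matrix
        y'_def Qc matrix_mul_assoc)
  also have "\<dots> = (\<chi> i j. if j = k then (mat 1 *v x) $ i else (mat 1 :: real^'n^'n) $ i $ j)"
    unfolding matrix_vector_mul_lid by (auto simp: vec_eq_iff outer_def x_def mat_def axis_def)
  finally have "det (transpose Q ** (mat 1 + outer y c) ** Q) = x $ k"
    using cramer_lemma[of k "mat 1" x] by simp
  moreover have "det (transpose Q ** (mat 1 + outer y c) ** Q) = det (mat 1 + outer y c)"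
    using det_orthogonal_matrix[OF Q] by (auto simp: det_mul)
  moreover have "norm c * y' $ k = c \<bullet> y"
  proof -
    have "c \<bullet> y = c \<bullet> (Q *v y')"
      unfolding y'_def matrix_vector_mul_assoc QQT by simp
    also have "\<dots> = norm c * y' $ k"
      by (simp add: inner_matrix_vector_transpose Qc inner_axis inner_commute)
    finally show ?thesis by simp
  qed
  ultimately show ?thesis by (simp add: x_def axis_def)
qed

lemma det_add_outer:
  fixes A :: "real^'n^'n"
  assumes "A *v y = u"
  shows "det (A + outer u w) = det A * (1 + w \<bullet> y)"
proof -
  have "A + outer u w = A ** (mat 1 + outer y w)"
    by (simp add: matrix_add_ldistrib matrix_mult_outer assms)
  then show ?thesis by (simp add: det_mul det_mat1_add_outer)
qed

lemma det_sub_outer_add_outer: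
  fixes Z G :: "real^'n^'n"
  assumes ZG: "Z ** G = mat 1" and G: "transpose G = G" and u: "u \<bullet> (G *v u) \<noteq> 1"
  shows "det (Z - outer u u + outer w w) =
    det Z * ((1 - u \<bullet> (G *v u)) * (1 + w \<bullet> (G *v w)) + (u \<bullet> (G *v w))\<^sup>2)"
proof -
  define t where "t = u \<bullet> (G *v u)"
  define A where "A = Z - outer u u"
  have ZG_vec: "Z *v (G *v z) = z" for z
    by (simp add: matrix_vector_mul_assoc ZG)
  have "G *v (- u) = - (G *v u)"
    by (simp add: matrix_vector_mult_def vec_eq_iff sum_negf)
  then have "Z *v (- (G *v u)) = - u"
    using ZG_vec[of "- u"] by simp
  from det_add_outer[OF this, of u] have "det A = det Z * (1 - t)"
    by (simp add: A_def outer_uminus_left t_def)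
  \<comment> \<open>\<open>y = A\<inverse> w\<close>, by the Sherman-Morrison formula\<close>
  define c where "c = (u \<bullet> (G *v w)) / (1 - t)"
  define y where "y = G *v w + c *\<^sub>R (G *v u)"
  have "c - (u \<bullet> (G *v w) + c * t) = 0"
    using u by (simp add: c_def t_def field_simps)
  then have "A *v y = w"
    by (simp add: A_def y_def algebra_simps ZG_vec outer_mult_vec inner_add_right t_def
        flip: scaleR_left_distrib scaleR_left_diff_distrib)
  then have "det (A + outer w w) = det A * (1 + w \<bullet> y)" by (rule det_add_outer)
  also have "w \<bullet> y = w \<bullet> (G *v w) + (u \<bullet> (G *v w))\<^sup>2 / (1 - t)"
    using inner_symmetric_matrix[OF G, of w u]
    by (simp add: y_def inner_add_right c_def power2_eq_square)
  finally have "det (A + outer w w) =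
      det Z * ((1 - t) * (1 + w \<bullet> (G *v w) + (u \<bullet> (G *v w))\<^sup>2 / (1 - t)))"
    using \<open>det A = det Z * (1 - t)\<close> by simp
  moreover have "(1 - t) * (1 + w \<bullet> (G *v w) + (u \<bullet> (G *v w))\<^sup>2 / (1 - t)) =
      (1 - t) * (1 + w \<bullet> (G *v w)) + (u \<bullet> (G *v w))\<^sup>2"
    using u by (simp add: t_def field_simps)
  ultimately show ?thesis by (simp add: A_def t_def)
qed

lemma pos_defD: "pos_def A \<Longrightarrow> y \<noteq> 0 \<Longrightarrow> 0 < y \<bullet> (A *v y)"
  by (simp add: pos_def_def)

lemma linear_coeff_zero_if_quadratic_nonneg:
  fixes a c :: real
  assumes nonneg: "\<And>t. 0 \<le> 2 * t * a + t\<^sup>2 * c"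
  shows "a = 0"
proof -
  have "0 \<le> c" using nonneg[of 1] nonneg[of "-1"] by simp
  define t where "t = - a / (c + 1)"
  have "t * (c + 1) = - a" using \<open>0 \<le> c\<close> by (simp add: t_def)
  moreover have "(c + 1)\<^sup>2 * (2 * t * a + t\<^sup>2 * c) = 2 * a * (t * (c + 1)) * (c + 1) + (t * (c + 1))\<^sup>2 * c"
    by algebra
  ultimately have "(c + 1)\<^sup>2 * (2 * t * a + t\<^sup>2 * c) = - (a\<^sup>2 * (c + 2))"
    by (simp add: algebra_simps power2_eq_square)
  moreover have "0 \<le> (c + 1)\<^sup>2 * (2 * t * a + t\<^sup>2 * c)" using nonneg[of t] by simp
  ultimately have "a\<^sup>2 * (c + 2) \<le> 0" by linarith
  with \<open>0 \<le> c\<close> show "a = 0" by (simp add: mult_le_0_iff)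
qed

lemma pos_def_if_pos_semidef_invertible:
  fixes Z :: "real^'n^'n"
  assumes Z: "transpose Z = Z" "pos_semidef Z" and det: "det Z \<noteq> 0"
  shows "pos_def Z"
  unfolding pos_def_def
proof (intro allI impI)
  fix y :: "real^'n" assume "y \<noteq> 0"
  show "0 < y \<bullet> (Z *v y)"
  proof (rule ccontr)
    assume "\<not> 0 < y \<bullet> (Z *v y)"
    then have "y \<bullet> (Z *v y) = 0" using Z(2) by (simp add: pos_semidef_def order.antisym)
    have "w \<bullet> (Z *v y) = 0" for w
    proof (rule linear_coeff_zero_if_quadratic_nonneg)
      fix t :: real
      have "(y + t *\<^sub>R w) \<bullet> (Z *v (y + t *\<^sub>R w)) = 2 * t * (w \<bullet> (Z *v y)) + t\<^sup>2 * (w \<bullet> (Z *v w))"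
        using \<open>y \<bullet> (Z *v y) = 0\<close> inner_symmetric_matrix[OF Z(1), of y w]
        by (simp add: algebra_simps inner_add_left inner_add_right matrix_vector_mult_scaleR
            power2_eq_square)
      then show "0 \<le> 2 * t * (w \<bullet> (Z *v y)) + t\<^sup>2 * (w \<bullet> (Z *v w))"
        using Z(2) unfolding pos_semidef_def by metis
    qed
    from this[of "Z *v y"] have "Z *v y = 0" by simp
    moreover obtain Z' where "Z' ** Z = mat 1"
      using det invertible_det_nz invertible_def by blast
    ultimately have "y = 0" by (metis matrix_vector_mul_assoc matrix_vector_mul_lid matrix_vector_mult_0_right)
    with \<open>y \<noteq> 0\<close> show False ..
  qed
qed

lemma rayleigh_max_exists:
  fixes Z X :: "real^'n^'n"
  assumes Z: "pos_def Z" and W: "subspace W" "W \<noteq> {0}"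
  obtains u lam where "u \<in> W" "u \<noteq> 0" "u \<bullet> (X *v u) = lam * (u \<bullet> (Z *v u))"
    "\<And>x. x \<in> W \<Longrightarrow> x \<bullet> (X *v x) \<le> lam * (x \<bullet> (Z *v x))"
proof -
  define K where "K = sphere 0 1 \<inter> W"
  define R where "R x = (x \<bullet> (X *v x)) / (x \<bullet> (Z *v x))" for x
  have normalize_in_K: "(1 / norm x) *\<^sub>R x \<in> K" if "x \<in> W" "x \<noteq> 0" for x
    using that W(1) by (simp add: K_def subspace_scale)
  have "compact K"
    unfolding K_def using closed_subspace[OF W(1)] by (intro compact_Int_closed) auto
  have "K \<noteq> {}"
    using W subspace_0 normalize_in_K by blast
  have "x \<bullet> (Z *v x) \<noteq> 0" if "x \<in> K" for x
  proof -
    have "x \<noteq> 0" using that by (auto simp: K_def)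
    then show ?thesis using pos_defD[OF Z] by force
  qed
  then have "continuous_on K R"
    unfolding R_def by (intro continuous_intros) auto
  then obtain u where "u \<in> K" and u_max: "\<And>y. y \<in> K \<Longrightarrow> R y \<le> R u"
    using continuous_attains_sup[OF \<open>compact K\<close> \<open>K \<noteq> {}\<close>] by blast
  then have "u \<in> W" "u \<noteq> 0" by (auto simp: K_def)
  moreover have "u \<bullet> (X *v u) = R u * (u \<bullet> (Z *v u))"
    using pos_defD[OF Z \<open>u \<noteq> 0\<close>] by (simp add: R_def)
  moreover have "x \<bullet> (X *v x) \<le> R u * (x \<bullet> (Z *v x))" if "x \<in> W" for x
  proof (cases "x = 0")
    case False
    have "R ((1 / norm x) *\<^sub>R x) = R x"
      using False by (simp add: R_def matrix_vector_mult_scaleR power2_eq_square[symmetric])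
    then have "R x \<le> R u" using u_max[OF normalize_in_K[OF that False]] by simp
    moreover have "0 < x \<bullet> (Z *v x)" using pos_defD[OF Z False] .
    ultimately show ?thesis by (simp add: R_def divide_le_eq)
  qed simp
  ultimately show ?thesis using that by blast
qed

lemma rayleigh_max_stationary:
  fixes Z X :: "real^'n^'n"
  assumes Z: "transpose Z = Z" and X: "transpose X = X" and W: "subspace W"
    and u: "u \<in> W" "u \<bullet> (X *v u) = lam * (u \<bullet> (Z *v u))"
    and max: "\<And>x. x \<in> W \<Longrightarrow> x \<bullet> (X *v x) \<le> lam * (x \<bullet> (Z *v x))"
    and w: "w \<in> W"
  shows "w \<bullet> (X *v u - lam *\<^sub>R (Z *v u)) = 0"
proof -
  define g where "g x = lam * (x \<bullet> (Z *v x)) - x \<bullet> (X *v x)" for x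
  have "w \<bullet> (lam *\<^sub>R (Z *v u) - X *v u) = 0"
  proof (rule linear_coeff_zero_if_quadratic_nonneg)
    fix t :: real
    have "u + t *\<^sub>R w \<in> W" using W u w by (simp add: subspace_add subspace_scale)
    then have "0 \<le> g (u + t *\<^sub>R w)" using max by (simp add: g_def)
    also have "g (u + t *\<^sub>R w) = 2 * t * (w \<bullet> (lam *\<^sub>R (Z *v u) - X *v u)) + t\<^sup>2 * g w"
      using u(2) inner_symmetric_matrix[OF Z, of u w] inner_symmetric_matrix[OF X, of u w]
      by (simp add: g_def algebra_simps inner_add_left inner_add_right inner_diff_right
          matrix_vector_mult_scaleR power2_eq_square)
    finally show "0 \<le> 2 * t * (w \<bullet> (lam *\<^sub>R (Z *v u) - X *v u)) + t\<^sup>2 * g w" .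
  qed
  then show ?thesis by (simp add: inner_diff_right)
qed

lemma eq_0_if_orthogonal_to_orthonormal_and_complement:
  fixes Z :: "real^'n^'n"
  assumes Z: "transpose Z = Z" and F: "finite F" "orthonormal_wrt Z F"
    and r_F: "\<forall>f\<in>F. r \<bullet> f = 0"
    and r_compl: "\<forall>x. (\<forall>f\<in>F. x \<bullet> (Z *v f) = 0) \<longrightarrow> r \<bullet> x = 0"
  shows "r = 0"
proof -
  define x where "x = r - (\<Sum>f\<in>F. (f \<bullet> (Z *v r)) *\<^sub>R f)"
  have "x \<bullet> (Z *v g) = 0" if "g \<in> F" for g
  proof -
    have "(\<Sum>f\<in>F. (f \<bullet> (Z *v r)) * (f \<bullet> (Z *v g))) =
        (\<Sum>f\<in>F. if f = g then g \<bullet> (Z *v r) else 0)"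
      using F(2) that by (intro sum.cong) (auto simp: orthonormal_wrt_def)
    also have "\<dots> = g \<bullet> (Z *v r)"
      using F(1) that by simp
    finally have "(\<Sum>f\<in>F. (f \<bullet> (Z *v r)) * (f \<bullet> (Z *v g))) = g \<bullet> (Z *v r)" .
    then show ?thesis
      by (simp add: x_def inner_diff_left inner_sum_left inner_symmetric_matrix[OF Z, of g r])
  qed
  then have "r \<bullet> x = 0" using r_compl by blast
  moreover have "r \<bullet> x = r \<bullet> r"
    using r_F by (simp add: x_def inner_diff_right inner_sum_right)
  ultimately show ?thesis by simp
qed

lemma gen_eigenvector_if_rayleigh_max_on_complement:
  fixes Z X :: "real^'n^'n"
  assumes Z: "transpose Z = Z" and X: "transpose X = X"
    and F: "finite F" "orthonormal_wrt Z F" and eig: "\<forall>f\<in>F. \<exists>m. X *v f = m *\<^sub>R (Z *v f)"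
    and u: "\<forall>f\<in>F. u \<bullet> (Z *v f) = 0" "u \<bullet> (X *v u) = lam * (u \<bullet> (Z *v u))"
    and max: "\<And>x. \<forall>f\<in>F. x \<bullet> (Z *v f) = 0 \<Longrightarrow> x \<bullet> (X *v x) \<le> lam * (x \<bullet> (Z *v x))"
  shows "X *v u = lam *\<^sub>R (Z *v u)"
proof -
  define W where "W = {x. \<forall>f\<in>F. x \<bullet> (Z *v f) = 0}"
  have "subspace W"
    by (auto simp: subspace_def W_def inner_add_left)
  define r where "r = X *v u - lam *\<^sub>R (Z *v u)"
  have "r = 0"
  proof (rule eq_0_if_orthogonal_to_orthonormal_and_complement[OF Z F])
    show "\<forall>f\<in>F. r \<bullet> f = 0"
    proof
      fix f assume "f \<in> F"
      then obtain m where "X *v f = m *\<^sub>R (Z *v f)" using eig by blast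
      then have "f \<bullet> (X *v u) = 0" "f \<bullet> (Z *v u) = 0"
        using u(1) \<open>f \<in> F\<close> inner_symmetric_matrix[OF X, of u f] inner_symmetric_matrix[OF Z, of u f]
        by simp_all
      then have "f \<bullet> r = 0"
        by (simp add: r_def inner_diff_right)
      then show "r \<bullet> f = 0"
        by (simp add: inner_commute)
    qed
    show "\<forall>x. (\<forall>f\<in>F. x \<bullet> (Z *v f) = 0) \<longrightarrow> r \<bullet> x = 0"
      using rayleigh_max_stationary[OF Z X \<open>subspace W\<close> _ u(2), of x for x] max u(1)
      by (simp add: W_def r_def inner_commute)
  qed
  then show ?thesis by (simp add: r_def)
qed

lemma orthonormal_gen_eigenvectors_extend:
  fixes Z X :: "real^'n^'n"
  assumes Z: "transpose Z = Z" "pos_def Z" and X: "transpose X = X"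
    and F: "finite F" "card F < CARD('n)" "orthonormal_wrt Z F"
    and eig: "\<forall>f\<in>F. \<exists>m. X *v f = m *\<^sub>R (Z *v f)"
  obtains u where "u \<notin> F" "orthonormal_wrt Z (insert u F)" "\<exists>m. X *v u = m *\<^sub>R (Z *v u)"
proof -
  define W where "W = {x. \<forall>f\<in>F. x \<bullet> (Z *v f) = 0}"
  have "subspace W"
    by (auto simp: subspace_def W_def inner_add_left)
  have "dim ((*v) Z ` F) < DIM(real^'n)"
    using dim_le_card'[of "(*v) Z ` F"] card_image_le[OF F(1), of "(*v) Z"] F by simp
  then obtain x0 where "x0 \<noteq> 0" "\<And>y. y \<in> span ((*v) Z ` F) \<Longrightarrow> orthogonal x0 y"
    using orthogonal_to_subspace_exists by blast
  then have "x0 \<in> W" "x0 \<noteq> 0" by (auto simp: W_def orthogonal_def intro: span_base)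
  then obtain u0 lam where u0: "u0 \<in> W" "u0 \<noteq> 0" "u0 \<bullet> (X *v u0) = lam * (u0 \<bullet> (Z *v u0))"
    and max: "\<And>x. x \<in> W \<Longrightarrow> x \<bullet> (X *v x) \<le> lam * (x \<bullet> (Z *v x))"
    using rayleigh_max_exists[OF Z(2) \<open>subspace W\<close>] by blast
  have eig_u0: "X *v u0 = lam *\<^sub>R (Z *v u0)"
    using gen_eigenvector_if_rayleigh_max_on_complement[OF Z(1) X F(1,3) eig _ u0(3)] u0(1) max
    by (simp add: W_def)
  define u where "u = (1 / sqrt (u0 \<bullet> (Z *v u0))) *\<^sub>R u0"
  have "0 < u0 \<bullet> (Z *v u0)" using pos_defD[OF Z(2) u0(2)] .
  then have "u \<bullet> (Z *v u) = 1"
    by (simp add: u_def matrix_vector_mult_scaleR)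
  moreover have "u \<in> W" using u0(1) \<open>subspace W\<close> by (simp add: u_def subspace_scale)
  moreover have "f \<bullet> (Z *v u) = 0" if "f \<in> F" for f
    using \<open>u \<in> W\<close> that inner_symmetric_matrix[OF Z(1), of f u] by (simp add: W_def)
  ultimately have "u \<notin> F" and "orthonormal_wrt Z (insert u F)"
    using F(3) by (auto simp: W_def orthonormal_wrt_def)
  moreover have "X *v u = lam *\<^sub>R (Z *v u)"
    by (simp add: u_def matrix_vector_mult_scaleR eig_u0)
  ultimately show ?thesis using that by blast
qed

lemma simultaneous_diagonalization:
  fixes Z X :: "real^'n^'n"
  assumes Z: "transpose Z = Z" "pos_def Z" and X: "transpose X = X"
  obtains U :: "real^'n^'n" and \<mu> :: "'n \<Rightarrow> real"
  where "transpose U ** Z ** U = mat 1"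
    and "transpose U ** X ** U = (\<chi> i j. if i = j then \<mu> i else 0)"
proof -
  have "\<exists>F. finite F \<and> card F = k \<and> orthonormal_wrt Z F \<and> (\<forall>f\<in>F. \<exists>m. X *v f = m *\<^sub>R (Z *v f))"
    if "k \<le> CARD('n)" for k
    using that
  proof (induction k)
    case 0
    show ?case by (intro exI[of _ "{}"]) (simp add: orthonormal_wrt_def)
  next
    case (Suc k)
    then obtain F where F: "finite F" "card F = k" "orthonormal_wrt Z F"
      and eig: "\<forall>f\<in>F. \<exists>m. X *v f = m *\<^sub>R (Z *v f)"
      by auto
    moreover obtain u where "u \<notin> F" "orthonormal_wrt Z (insert u F)"
      "\<exists>m. X *v u = m *\<^sub>R (Z *v u)"
      using orthonormal_gen_eigenvectors_extend[OF Z X F(1) _ F(3) eig] F(2) Suc.prems by auto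
    ultimately show ?case by (intro exI[of _ "insert u F"]) auto
  qed
  then obtain F where F: "finite F" "card F = CARD('n)" "orthonormal_wrt Z F"
    and eig: "\<forall>f\<in>F. \<exists>m. X *v f = m *\<^sub>R (Z *v f)"
    by blast
  obtain e where e: "bij_betw e (UNIV :: 'n set) F"
    using finite_same_card_bij[OF finite F(1)] F(2) by auto
  define U where "U = (\<chi> i k. e k $ i)"
  define \<mu> where "\<mu> k = (SOME m. X *v e k = m *\<^sub>R (Z *v e k))" for k
  have column_U: "column k U = e k" for k
    by (simp add: U_def column_def vec_eq_iff)
  have eZ: "e k \<bullet> (Z *v e l) = (if k = l then 1 else 0)" for k l
    using F(3) e by (auto simp: orthonormal_wrt_def bij_betw_def inj_on_def)
  have eX: "X *v e k = \<mu> k *\<^sub>R (Z *v e k)" for k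
  proof -
    have "\<exists>m. X *v e k = m *\<^sub>R (Z *v e k)" using eig bij_betw_apply[OF e] by blast
    then show ?thesis unfolding \<mu>_def by (rule someI_ex)
  qed
  have "transpose U ** Z ** U = mat 1"
    by (simp add: vec_eq_iff transpose_mult_mult_nth column_U eZ mat_def)
  moreover have "transpose U ** X ** U = (\<chi> i j. if i = j then \<mu> i else 0)"
    by (simp add: vec_eq_iff transpose_mult_mult_nth column_U eX eZ)
  ultimately show ?thesis using that by blast
qed

lemma det_pos_if_pos_def:
  fixes Z :: "real^'n^'n"
  assumes "transpose Z = Z" "pos_def Z"
  shows "0 < det Z"
proof -
  obtain U :: "real^'n^'n" where "transpose U ** Z ** U = mat 1"
    using simultaneous_diagonalization[OF assms assms(1)] by blast
  then have "det (transpose U ** Z ** U) = 1" by simp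
  then have "det Z * (det U)\<^sup>2 = 1"
    by (simp add: det_mul det_transpose power2_eq_square mult_ac)
  then show ?thesis
    using zero_less_mult_iff[of "det Z" "(det U)\<^sup>2"] by simp
qed

lemma symmetric_right_inverse:
  fixes Z G :: "real^'n^'n"
  assumes "transpose Z = Z" "Z ** G = mat 1"
  shows "transpose G = G"
proof -
  have "transpose G ** Z = mat 1"
    using arg_cong[OF assms(2), of transpose] assms(1) by (simp add: matrix_transpose_mul)
  then have "transpose G = transpose G ** (Z ** G)"
    using assms(2) by simp
  also have "\<dots> = G"
    by (simp add: matrix_mul_assoc \<open>transpose G ** Z = mat 1\<close>)
  finally show ?thesis .
qed

lemma pos_semidef_right_inverse:
  fixes Z G :: "real^'n^'n"
  assumes "transpose Z = Z" "pos_semidef Z" "Z ** G = mat 1"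
  shows "pos_semidef G"
  unfolding pos_semidef_def
proof
  fix y
  have "y \<bullet> (G *v y) = (Z *v (G *v y)) \<bullet> (G *v y)"
    by (simp add: matrix_vector_mul_assoc assms(3))
  also have "\<dots> = (G *v y) \<bullet> (Z *v (G *v y))"
    by (rule inner_commute)
  finally show "0 \<le> y \<bullet> (G *v y)"
    using assms(2) by (simp add: pos_semidef_def)
qed

lemma root_det_le_trace:
  fixes Z X G :: "real^'n^'n"
  assumes Z: "transpose Z = Z" "pos_def Z" and X: "transpose X = X" "pos_semidef X"
    and ZG: "Z ** G = mat 1"
  shows "root CARD('n) (det X) \<le> root CARD('n) (det Z) * (trace (G ** X) / CARD('n))"
proof -
  obtain U :: "real^'n^'n" and \<mu> where U: "transpose U ** Z ** U = mat 1"
    and D: "transpose U ** X ** U = (\<chi> i j. if i = j then \<mu> i else 0)"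
    using simultaneous_diagonalization[OF Z X(1)] by blast
  have "G = (U ** (transpose U ** Z)) ** G"
    using matrix_left_right_inverse1[OF U] by simp
  also have "\<dots> = U ** transpose U"
    using ZG by (simp flip: matrix_mul_assoc)
  finally have "trace (G ** X) = trace (U ** (transpose U ** X))"
    by (simp add: matrix_mul_assoc)
  also have "\<dots> = trace ((transpose U ** X) ** U)"
    by (rule trace_mul_sym)
  also have "\<dots> = (\<Sum>k\<in>UNIV. \<mu> k)"
    by (simp add: D trace_def)
  finally have trace_eq: "trace (G ** X) = (\<Sum>k\<in>UNIV. \<mu> k)" .
  have \<mu>_nonneg: "0 \<le> \<mu> k" for k
  proof -
    have "\<mu> k = column k U \<bullet> (X *v column k U)"
      using arg_cong[OF D, of "\<lambda>A. A $ k $ k"] by (simp add: transpose_mult_mult_nth)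
    then show ?thesis using X(2) by (simp add: pos_semidef_def)
  qed
  have det_U: "det Z * (det U)\<^sup>2 = 1"
    using arg_cong[OF U, of det] by (simp add: det_mul det_transpose power2_eq_square mult_ac)
  have "det X * (det U)\<^sup>2 = (\<Prod>k\<in>UNIV. \<mu> k)"
    using arg_cong[OF D, of det] by (simp add: det_mul det_transpose det_diagonal power2_eq_square mult_ac)
  then have "det X = det Z * (\<Prod>k\<in>UNIV. \<mu> k)"
    using det_U by (metis mult.assoc mult.commute mult_1)
  then have "root CARD('n) (det X) = root CARD('n) (det Z) * root CARD('n) (\<Prod>k\<in>UNIV. \<mu> k)"
    by (simp add: real_root_mult)
  also have "\<dots> \<le> root CARD('n) (det Z) * ((\<Sum>k\<in>UNIV. \<mu> k) / CARD('n))"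
  proof (rule mult_left_mono)
    show "root CARD('n) (\<Prod>k\<in>UNIV. \<mu> k) \<le> (\<Sum>k\<in>UNIV. \<mu> k) / CARD('n)"
      using arith_geom_mean[of UNIV \<mu>] \<mu>_nonneg
      by (simp add: root_powr_inverse prod_nonneg sum_divide_distrib)
    show "0 \<le> root CARD('n) (det Z)"
      using det_pos_if_pos_def[OF Z] by simp
  qed
  finally show ?thesis by (simp add: trace_eq)
qed

lemma trace_lower_bound_if_root_det_le:
  fixes Z X G :: "real^'n^'n"
  assumes Z: "transpose Z = Z" "pos_def Z" and X: "transpose X = X" "pos_semidef X"
    and ZG: "Z ** G = mat 1"
    and c: "0 \<le> c" "root CARD('n) (det Z) \<le> c * root CARD('n) (det X)"
  shows "CARD('n) \<le> c * trace (G ** X)"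
proof -
  have "root CARD('n) (det Z) * 1 \<le> c * (root CARD('n) (det Z) * (trace (G ** X) / CARD('n)))"
    using c mult_left_mono[OF root_det_le_trace[OF Z X ZG] c(1)] by simp
  then have "root CARD('n) (det Z) * 1 \<le> root CARD('n) (det Z) * (c * trace (G ** X) / CARD('n))"
    by (simp add: mult_ac)
  moreover have "0 < root CARD('n) (det Z)"
    using det_pos_if_pos_def[OF Z] by simp
  ultimately have "1 \<le> c * trace (G ** X) / CARD('n)"
    by (meson mult_le_cancel_left_pos)
  then show ?thesis by (simp add: field_simps)
qed

lemma det_sub_outer_add_outer_ge:
  fixes Z G :: "real^'n^'n"
  assumes Z: "transpose Z = Z" "pos_def Z" and ZG: "Z ** G = mat 1"
    and u: "u \<bullet> (G *v u) < 1"
  shows "det Z * ((1 - u \<bullet> (G *v u)) * (1 + w \<bullet> (G *v w))) \<le> det (Z - outer u u + outer w w)"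
  using det_sub_outer_add_outer[OF ZG symmetric_right_inverse[OF Z(1) ZG], of u w]
    det_pos_if_pos_def[OF Z] u
  by simp

lemma sum_leverage_eq_card:
  fixes v :: "'a \<Rightarrow> real^'n"
  assumes "(\<Sum>i\<in>S. outer (v i) (v i)) ** G = mat 1"
  shows "(\<Sum>i\<in>S. v i \<bullet> (G *v v i)) = CARD('n)"
proof -
  have "(\<Sum>i\<in>S. v i \<bullet> (G *v v i)) = trace (G ** (\<Sum>i\<in>S. outer (v i) (v i)))"
    using trace_mult_sum_outer[of G "\<lambda>_. 1" v S] by simp
  also have "\<dots> = CARD('n)"
    using matrix_left_right_inverse1[OF assms] by (simp add: trace_I)
  finally show ?thesis .
qed

lemma weighted_sum_le_exchange:
  fixes x \<tau> :: "'a \<Rightarrow> real"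
  assumes "finite A" "S \<subseteq> A" and x: "\<forall>i\<in>A. 0 \<le> x i \<and> x i \<le> 1" "(\<Sum>i\<in>A. x i) = card S"
    and m: "\<forall>i\<in>S. m \<le> \<tau> i" and M: "\<forall>j\<in>A - S. \<tau> j \<le> M"
  shows "(\<Sum>i\<in>A. x i * \<tau> i) \<le> (\<Sum>i\<in>S. \<tau> i) + (\<Sum>j\<in>A - S. x j) * (M - m)"
proof -
  have fin: "finite S" using assms(1,2) finite_subset by blast
  have split: "(\<Sum>i\<in>A. f i) = (\<Sum>j\<in>A - S. f j) + (\<Sum>i\<in>S. f i)" for f :: "'a \<Rightarrow> real"
    using assms(1,2) by (intro sum.subset_diff)
  have "(\<Sum>j\<in>A - S. x j * \<tau> j) \<le> (\<Sum>j\<in>A - S. x j) * M"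
    unfolding sum_distrib_right using x(1) M by (intro sum_mono mult_left_mono) auto
  moreover have "(\<Sum>i\<in>S. 1 - x i) * m \<le> (\<Sum>i\<in>S. (1 - x i) * \<tau> i)"
    unfolding sum_distrib_right using x(1) m assms(2) by (intro sum_mono mult_left_mono) auto
  moreover have "(\<Sum>i\<in>S. 1 - x i) = (\<Sum>j\<in>A - S. x j)"
    using x(2) split[of x] fin by (simp add: sum_subtractf)
  moreover have "(\<Sum>i\<in>S. x i * \<tau> i) = (\<Sum>i\<in>S. \<tau> i) - (\<Sum>i\<in>S. (1 - x i) * \<tau> i)"
    by (simp add: algebra_simps sum_subtractf)
  ultimately show ?thesis
    using split[of "\<lambda>i. x i * \<tau> i"] by (simp add: algebra_simps)
qed

lemma swap_gain_bound:
  fixes d b T m M w :: real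
  assumes "1 \<le> d" "d + 1 \<le> b" "d * b \<le> (b - d - 1) * T"
    and "0 \<le> m" "b * m \<le> d" "0 \<le> w" "w \<le> b" "T - d \<le> w * (M - m)"
  shows "1 + d / (4 * b ^ 3) \<le> (1 - m) * (1 + M)"
proof -
  define \<delta> where "\<delta> = M - m"
  have "0 < b" using assms(1,2) by linarith
  have "0 < d * b" using assms(1) \<open>0 < b\<close> by simp
  then have "0 < b - d - 1"
    using assms(2,3) by (cases "b - d - 1 = 0") auto
  have "d * (d + 1) \<le> (b - d - 1) * (T - d)"
    using assms(3) by (simp add: algebra_simps)
  moreover have "0 < d * (d + 1)" using assms(1) by simp
  ultimately have "0 < (b - d - 1) * (T - d)" by linarith
  then have "0 < T - d"
    using zero_less_mult_pos \<open>0 < b - d - 1\<close> by blast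
  then have "0 < w * \<delta>"
    using assms(8) by (simp add: \<delta>_def)
  then have "0 < \<delta>"
    using assms(6) by (simp add: zero_less_mult_iff)
  have "w * \<delta> \<le> b * \<delta>"
    using assms(7) \<open>0 < \<delta>\<close> by (simp add: mult_right_mono)
  then have "T - d \<le> b * \<delta>"
    using assms(8) by (simp add: \<delta>_def)
  then have "(b - d - 1) * (T - d) \<le> (b - d - 1) * (b * \<delta>)"
    using \<open>0 < b - d - 1\<close> by (simp add: mult_left_mono)
  then have "d * (d + 1) \<le> (b - d - 1) * (b * \<delta>)"
    using \<open>d * (d + 1) \<le> (b - d - 1) * (T - d)\<close> by linarith
  also have "\<dots> \<le> (b * (1 - m)) * (b * \<delta>)"
    using assms(5) \<open>0 < b\<close> \<open>0 < \<delta>\<close> by (intro mult_right_mono) (auto simp: algebra_simps)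
  finally have "d * (d + 1) \<le> \<delta> * (1 - m) * b\<^sup>2"
    by (simp add: power2_eq_square mult_ac)
  moreover have "(b * m)\<^sup>2 \<le> d\<^sup>2"
    using assms(4,5) \<open>0 < b\<close> by (intro power_mono) auto
  ultimately have "d \<le> (\<delta> * (1 - m) - m\<^sup>2) * b\<^sup>2"
    by (simp add: algebra_simps power2_eq_square)
  then have "d / b\<^sup>2 \<le> \<delta> * (1 - m) - m\<^sup>2"
    using \<open>0 < b\<close> by (simp add: divide_le_eq)
  moreover have "d / (4 * b ^ 3) \<le> d / b\<^sup>2"
    using assms(1,2) \<open>0 < b\<close>
    by (intro divide_left_mono) (auto simp: power2_eq_square power3_eq_cube)
  moreover have "(1 - m) * (1 + M) = 1 + (\<delta> * (1 - m) - m\<^sup>2)"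
    by (simp add: \<delta>_def algebra_simps power2_eq_square)
  ultimately show ?thesis by linarith
qed

lemma exists_swap_with_leverage_gain:
  fixes x \<tau> :: "'a \<Rightarrow> real" and d :: nat
  assumes A: "finite A" "S \<subseteq> A" "A - S \<noteq> {}"
    and x: "\<forall>i\<in>A. 0 \<le> x i \<and> x i \<le> 1" "(\<Sum>i\<in>A. x i) = card S"
    and \<tau>: "\<forall>i\<in>S. 0 \<le> \<tau> i" "(\<Sum>i\<in>S. \<tau> i) = d"
    and d: "1 \<le> d" "d + 1 \<le> card S"
    and T: "d * card S \<le> (card S - real d - 1) * (\<Sum>i\<in>A. x i * \<tau> i)"
  obtains i j where "i \<in> S" "j \<in> A - S" "\<tau> i < 1"
    "1 + d / (4 * card S ^ 3) \<le> (1 - \<tau> i) * (1 + \<tau> j)"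
proof -
  have "finite S" "S \<noteq> {}" using A d finite_subset by fastforce+
  have b: "real d + 1 \<le> card S" using of_nat_mono[OF d(2), where 'a=real] by simp
  obtain i where i: "i \<in> S" "\<forall>k\<in>S. \<tau> i \<le> \<tau> k"
    using arg_min_if_finite[OF \<open>finite S\<close> \<open>S \<noteq> {}\<close>, of \<tau>] by (meson not_le)
  obtain j where j: "j \<in> A - S" "\<forall>k\<in>A - S. \<tau> k \<le> \<tau> j"
    using arg_min_if_finite[OF _ A(3), of "\<lambda>k. - \<tau> k"] A(1) by (meson finite_Diff neg_less_iff_less not_le)
  define w where "w = (\<Sum>k\<in>A - S. x k)"
  have "card S * \<tau> i \<le> d"
    using sum_bounded_below[of S "\<tau> i" \<tau>] i(2) \<tau>(2) by simp
  moreover have "0 \<le> w"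
    using x(1) by (auto simp: w_def intro!: sum_nonneg)
  moreover have "w \<le> card S"
  proof -
    have "w = card S - (\<Sum>k\<in>S. x k)"
      using x(2) sum.subset_diff[OF A(2,1), of x] by (simp add: w_def)
    moreover have "0 \<le> (\<Sum>k\<in>S. x k)"
      using x(1) A(2) by (auto intro!: sum_nonneg)
    ultimately show ?thesis by linarith
  qed
  moreover have "(\<Sum>k\<in>A. x k * \<tau> k) - d \<le> w * (\<tau> j - \<tau> i)"
    using weighted_sum_le_exchange[OF A(1,2) x, of "\<tau> i" \<tau> "\<tau> j"] i j \<tau>(2) by (simp add: w_def)
  ultimately have "1 + d / (4 * card S ^ 3) \<le> (1 - \<tau> i) * (1 + \<tau> j)"
    using swap_gain_bound[of d "card S" "\<Sum>k\<in>A. x k * \<tau> k" "\<tau> i" w "\<tau> j"] b d(1) T \<tau>(1) i(1)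
    by simp
  moreover have "\<tau> i < 1"
  proof -
    have "card S * \<tau> i < card S * 1"
      using \<open>card S * \<tau> i \<le> d\<close> b by linarith
    moreover have "0 < real (card S)" using b by linarith
    ultimately show ?thesis by (simp add: mult_less_cancel_left_pos)
  qed
  ultimately show ?thesis using that i(1) j(1) by blast
qed

theorem proposition3p4:
  fixes v :: "nat \<Rightarrow> real^'d" and n b :: nat and x :: "nat \<Rightarrow> real"
    and S :: "nat set" and istar jstar :: nat
  assumes hb: "b \<ge> CARD('d) + 1"
    and hx: "\<forall>i<n. 0 \<le> x i \<and> x i \<le> 1"
    and hxsum: "(\<Sum>i<n. x i) = real b"
    and hS: "S \<subseteq> {..<n}" and hcard: "card S = b"
    and hZ: "det (\<Sum>i\<in>S. outer (v i) (v i)) \<noteq> 0"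
    and hi: "istar \<in> S" and hj: "jstar \<in> {..<n} - S"
    and hmax: "\<forall>i\<in>S. \<forall>j\<in>{..<n} - S.
       det ((\<Sum>k\<in>S. outer (v k) (v k)) - outer (v i) (v i) + outer (v j) (v j))
       \<le> det ((\<Sum>k\<in>S. outer (v k) (v k)) - outer (v istar) (v istar) + outer (v jstar) (v jstar))"
    and hcond: "root CARD('d) (det (\<Sum>i\<in>S. outer (v i) (v i)))
       \<le> (real b - real CARD('d) - 1) / real b
         * root CARD('d) (det (\<Sum>i<n. x i *\<^sub>R outer (v i) (v i)))"
  shows "det ((\<Sum>k\<in>S. outer (v k) (v k)) - outer (v istar) (v istar) + outer (v jstar) (v jstar))
         \<ge> (1 + real CARD('d) / (4 * real b ^ 3)) * det (\<Sum>i\<in>S. outer (v i) (v i))"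
proof -
  define Z where "Z = (\<Sum>i\<in>S. outer (v i) (v i))"
  define X where "X = (\<Sum>i<n. x i *\<^sub>R outer (v i) (v i))"
  define d where "d = CARD('d)"
  have Z: "transpose Z = Z" "pos_semidef Z" and X: "transpose X = X" "pos_semidef X"
    using transpose_sum_outer[of "\<lambda>_. 1" v S] pos_semidef_sum_outer[of S "\<lambda>_. 1" v]
      transpose_sum_outer[of x v "{..<n}"] pos_semidef_sum_outer[of "{..<n}" x v] hx
    by (simp_all add: Z_def X_def)
  have Z_pd: "pos_def Z"
    using pos_def_if_pos_semidef_invertible[OF Z] hZ by (simp add: Z_def)
  obtain G where ZG: "Z ** G = mat 1"
    using hZ by (auto simp: Z_def invertible_det_nz[symmetric] invertible_def)
  define \<tau> where "\<tau> j = v j \<bullet> (G *v v j)" for j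
  have "d \<le> (b - real d - 1) / b * trace (G ** X)"
    using trace_lower_bound_if_root_det_le[OF Z(1) Z_pd X ZG _ hcond[folded Z_def X_def]] hb
    by (simp add: d_def)
  moreover have "trace (G ** X) = (\<Sum>j<n. x j * \<tau> j)"
    by (simp add: X_def trace_mult_sum_outer \<tau>_def)
  ultimately have "d * b \<le> (b - real d - 1) * (\<Sum>j<n. x j * \<tau> j)"
    using hb by (simp add: field_simps)
  moreover have "0 \<le> \<tau> j" for j
    using pos_semidef_right_inverse[OF Z ZG] by (simp add: pos_semidef_def \<tau>_def)
  moreover have "(\<Sum>i\<in>S. \<tau> i) = d"
    using sum_leverage_eq_card[of v S G] ZG by (simp add: Z_def \<tau>_def d_def)
  ultimately obtain i j where ij: "i \<in> S" "j \<in> {..<n} - S" "\<tau> i < 1"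
    and gain: "1 + d / (4 * b ^ 3) \<le> (1 - \<tau> i) * (1 + \<tau> j)"
    using exists_swap_with_leverage_gain[of "{..<n}" S x \<tau> d] hS hj hx hxsum hcard hb
    by (auto simp: d_def)
  have "(1 + d / (4 * b ^ 3)) * det Z \<le> det Z * ((1 - \<tau> i) * (1 + \<tau> j))"
    using mult_right_mono[OF gain] det_pos_if_pos_def[OF Z(1) Z_pd] by (simp add: mult.commute)
  also have "\<dots> \<le> det (Z - outer (v i) (v i) + outer (v j) (v j))"
    using det_sub_outer_add_outer_ge[OF Z(1) Z_pd ZG] ij(3) by (simp add: \<tau>_def)
  also have "\<dots> \<le> det (Z - outer (v istar) (v istar) + outer (v jstar) (v jstar))"
    using hmax ij(1,2) by (simp add: Z_def)
  finally show ?thesis by (simp add: Z_def d_def)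
qed

end
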